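(* Let $\{(U_{k,i}, V_{k,i}); i \geq 1, k \geq 1\}$ be an array of i.i.d. two-dimensional random vectors and let $\{p_n; n \geq 1\}$ be a nondecreasing sequence of positive integers. Let $$T_n = \max_{1 \leq i \neq j \leq p_n} \Big| \sum_{k=1}^n U_{k,i} V_{k,j} \Big|, \quad n \geq 1.$$ Let $\{Y_n; n \geq 1\}$ be i.i.d. random variables with $Y_1$ having the same distribution as $U_{1,1} V_{1,2}$, and $S_n = \sum_{k=1}^n Y_k$. Let $\{a_n; n \geq 1\}$ be positive constants with $a_n \uparrow \infty$ and $$\lim_{c \downarrow 1} \limsup_{n \to \infty} \frac{a_{[cn]}}{a_n} = 1.$$ If $S_n/a_n \to 0$ in probability and $$\sum_{n=1}^{\infty} \frac{p_n^2}{n} P\Big(\frac{|S_n|}{a_n} > \lambda\Big) < \infty \quad \text{for some } 0 < \lambda < \infty,$$ then $$\limsup_{n \to \infty} \frac{T_n}{a_n} \leq \lambda \quad \text{a.s.}$$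
   Context: $[x]$ denotes the integer part of $x$. *)

theory Defs
  imports "HOL-Probability.Probability"
begin

text \<open>The maximum over an empty index set (p_n = 1) is taken to be 0; since all
  candidate values are nonnegative, inserting 0 does not change the maximum otherwise.\<close>
definition Tstat :: "(nat \<Rightarrow> nat \<Rightarrow> 'a \<Rightarrow> real) \<Rightarrow> (nat \<Rightarrow> nat \<Rightarrow> 'a \<Rightarrow> real)
    \<Rightarrow> (nat \<Rightarrow> nat) \<Rightarrow> nat \<Rightarrow> 'a \<Rightarrow> real" where
  "Tstat U V p n \<omega> = Max (insert 0
     {\<bar>\<Sum>k=1..n. U k i \<omega> * V k j \<omega>\<bar> | i j.
        1 \<le> i \<and> i \<le> p n \<and> 1 \<le> j \<and> j \<le> p n \<and> i \<noteq> j})"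

end

theory Submission
  imports Defs
begin

(* For i ~= j the cross sum W_ij(m) = sum_{k<=m} U_{k,i} V_{k,j} is a partial sum of independent
   copies of Y_1, hence has the law of S_m.  Fix delta > 0 and blocks n_k growing geometrically with
   ratio close to 1, so that the regularity of a gives a(n_{k+2}) <= (1 + delta) a(n_k).  Ottaviani's
   maximal inequality and a union bound over the at most p^2 pairs bound the probability that some
   |W_ij(m)| with m <= n_{k+1} and i, j <= p(n_{k+1}) exceeds (1 + 3 delta) lam a(n_k) by
   4 p_n^2 P(|S_n| > lam a_n), for every n in (n_{k+1}, n_{k+2}].  This block has length comparable
   to n_{k+2}, so averaging over it dominates the probability by a block of the convergent series
   sum p_n^2/n P(|S_n| > lam a_n).  Borel-Cantelli yields limsup T_n/a_n <= (1 + 3 delta) lam a.s.,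
   and delta -> 0 concludes. *)

lemma sum_atLeastAtMost_split:
  fixes f :: "nat \<Rightarrow> 'b::comm_monoid_add"
  assumes "m \<le> n"
  shows "(\<Sum>k=1..n. f k) = (\<Sum>k=1..m. f k) + (\<Sum>k=Suc m..n. f k)"
proof -
  have "{1..n} = {1..m} \<union> {Suc m..n}" using assms by auto
  then show ?thesis by (simp add: sum.union_disjoint[symmetric] ivl_disj_int)
qed

lemma borel_measurable_fst_real [measurable]:
  "fst \<in> borel_measurable (borel :: (real \<times> real) measure)"
  by (subst borel_prod[symmetric]) simp

lemma borel_measurable_snd_real [measurable]:
  "snd \<in> borel_measurable (borel :: (real \<times> real) measure)"
  by (subst borel_prod[symmetric]) simp

section \<open>Sums of independent random variables\<close>

lemma (in prob_space) distr_indep_binop_eq: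
  fixes A B A' B' :: "'a \<Rightarrow> real" and f :: "real \<Rightarrow> real \<Rightarrow> real"
  assumes indep: "indep_var borel A borel B" and indep': "indep_var borel A' borel B'"
    and A: "distr M borel A = distr M borel A'" and B: "distr M borel B = distr M borel B'"
    and f: "(\<lambda>(x, y). f x y) \<in> borel_measurable (borel \<Otimes>\<^sub>M borel)"
  shows "distr M borel (\<lambda>\<omega>. f (A \<omega>) (B \<omega>)) = distr M borel (\<lambda>\<omega>. f (A' \<omega>) (B' \<omega>))"
proof -
  have rv: "random_variable borel A" "random_variable borel B"
    "random_variable borel A'" "random_variable borel B'"
    using indep indep' indep_var_rv1 indep_var_rv2 by blast+
  have joint: "distr M (borel \<Otimes>\<^sub>M borel) (\<lambda>\<omega>. (A \<omega>, B \<omega>))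
             = distr M (borel \<Otimes>\<^sub>M borel) (\<lambda>\<omega>. (A' \<omega>, B' \<omega>))"
    using indep indep' A B unfolding indep_var_distribution_eq by metis
  have "distr M borel (\<lambda>\<omega>. f (A \<omega>) (B \<omega>))
      = distr (distr M (borel \<Otimes>\<^sub>M borel) (\<lambda>\<omega>. (A \<omega>, B \<omega>))) borel (\<lambda>(x, y). f x y)"
    using rv by (subst distr_distr) (auto intro!: f measurable_Pair simp: comp_def)
  also have "\<dots> = distr M borel (\<lambda>\<omega>. f (A' \<omega>) (B' \<omega>))"
    unfolding joint using rv by (subst distr_distr) (auto intro!: f measurable_Pair simp: comp_def)
  finally show ?thesis .
qed

lemma (in prob_space) distr_partial_sums_eq:
  fixes \<xi> \<eta> :: "nat \<Rightarrow> 'a \<Rightarrow> real"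
  assumes \<xi>: "indep_vars (\<lambda>_. borel) \<xi> {1..}" and \<eta>: "indep_vars (\<lambda>_. borel) \<eta> {1..}"
    and distr_eq: "\<And>k. k \<ge> 1 \<Longrightarrow> distr M borel (\<xi> k) = distr M borel (\<eta> k)"
  shows "distr M borel (\<lambda>\<omega>. \<Sum>k=1..m. \<xi> k \<omega>) = distr M borel (\<lambda>\<omega>. \<Sum>k=1..m. \<eta> k \<omega>)"
proof (induction m)
  case (Suc m)
  have "indep_vars (\<lambda>_. borel) \<xi> (insert (Suc m) {1..m})" "indep_vars (\<lambda>_. borel) \<eta> (insert (Suc m) {1..m})"
    by (auto intro: indep_vars_subset[OF \<xi>] indep_vars_subset[OF \<eta>])
  then have "distr M borel (\<lambda>\<omega>. \<xi> (Suc m) \<omega> + (\<Sum>k=1..m. \<xi> k \<omega>))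
           = distr M borel (\<lambda>\<omega>. \<eta> (Suc m) \<omega> + (\<Sum>k=1..m. \<eta> k \<omega>))"
    by (intro distr_indep_binop_eq[OF indep_vars_sum indep_vars_sum distr_eq Suc]) auto
  then show ?case by (simp add: add.commute)
qed simp

lemma (in prob_space) prob_indep_restrict:
  fixes \<xi> :: "'i \<Rightarrow> 'a \<Rightarrow> real"
  assumes ind: "indep_vars (\<lambda>_. borel) \<xi> K" and IJ: "I \<inter> J = {}" "I \<subseteq> K" "J \<subseteq> K"
    and P: "Measurable.pred (PiM I (\<lambda>_. borel)) P" and Q: "Measurable.pred (PiM J (\<lambda>_. borel)) Q"
  shows "prob {\<omega>\<in>space M. P (restrict (\<lambda>k. \<xi> k \<omega>) I) \<and> Q (restrict (\<lambda>k. \<xi> k \<omega>) J)}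
       = prob {\<omega>\<in>space M. P (restrict (\<lambda>k. \<xi> k \<omega>) I)} * prob {\<omega>\<in>space M. Q (restrict (\<lambda>k. \<xi> k \<omega>) J)}"
proof -
  let ?X = "\<lambda>\<omega>. restrict (\<lambda>k. \<xi> k \<omega>) I" and ?Y = "\<lambda>\<omega>. restrict (\<lambda>k. \<xi> k \<omega>) J"
  let ?P = "{f\<in>space (PiM I (\<lambda>_. borel)). P f}" and ?Q = "{f\<in>space (PiM J (\<lambda>_. borel)). Q f}"
  have "?P \<in> sets (PiM I (\<lambda>_. borel))" "?Q \<in> sets (PiM J (\<lambda>_. borel))"
    using P Q by (simp_all add: pred_def)
  then have "prob ((\<lambda>\<omega>. (?X \<omega>, ?Y \<omega>)) -` (?P \<times> ?Q) \<inter> space M)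
           = prob (?X -` ?P \<inter> space M) * prob (?Y -` ?Q \<inter> space M)"
    by (rule indep_varD[OF indep_var_restrict[OF ind IJ]])
  moreover have "?X \<omega> \<in> space (PiM I (\<lambda>_. borel))" "?Y \<omega> \<in> space (PiM J (\<lambda>_. borel))" for \<omega>
    by (auto simp: space_PiM)
  ultimately show ?thesis
    by (simp add: vimage_def Int_def conj_ac)
qed

lemma (in prob_space) prob_partial_sum_increment_indep:
  fixes \<xi> :: "nat \<Rightarrow> 'a \<Rightarrow> real"
  assumes ind: "indep_vars (\<lambda>_. borel) \<xi> {1..}" and "m \<le> n"
    and A: "A \<in> sets borel" and B: "B \<in> sets borel"
  shows "prob {\<omega>\<in>space M. (\<Sum>k=1..m. \<xi> k \<omega>) \<in> A \<and> (\<Sum>k=1..n. \<xi> k \<omega>) - (\<Sum>k=1..m. \<xi> k \<omega>) \<in> B}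
       = prob {\<omega>\<in>space M. (\<Sum>k=1..m. \<xi> k \<omega>) \<in> A}
         * prob {\<omega>\<in>space M. (\<Sum>k=1..n. \<xi> k \<omega>) - (\<Sum>k=1..m. \<xi> k \<omega>) \<in> B}"
proof -
  have "Measurable.pred (PiM {1..m} (\<lambda>_. borel)) (\<lambda>f. (\<Sum>k\<in>{1..m}. f k) \<in> A)"
    "Measurable.pred (PiM {Suc m..n} (\<lambda>_. borel)) (\<lambda>f. (\<Sum>k\<in>{Suc m..n}. f k) \<in> B)"
    using A B by measurable
  note indep = prob_indep_restrict[OF ind _ _ _ this]
  have "(\<Sum>k\<in>{1..m}. restrict (\<lambda>k. \<xi> k \<omega>) {1..m} k) = (\<Sum>k=1..m. \<xi> k \<omega>)"
    "(\<Sum>k\<in>{Suc m..n}. restrict (\<lambda>k. \<xi> k \<omega>) {Suc m..n} k)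
       = (\<Sum>k=1..n. \<xi> k \<omega>) - (\<Sum>k=1..m. \<xi> k \<omega>)" for \<omega>
    using sum_atLeastAtMost_split[OF \<open>m \<le> n\<close>, of "\<lambda>k. \<xi> k \<omega>"] by simp_all
  with indep show ?thesis by auto
qed

lemma (in prob_space) prob_first_exceedance_indep:
  fixes \<xi> :: "nat \<Rightarrow> 'a \<Rightarrow> real"
  assumes ind: "indep_vars (\<lambda>_. borel) \<xi> {1..}" and "m \<le> N"
  shows "prob {\<omega>\<in>space M. (\<bar>\<Sum>k=1..m. \<xi> k \<omega>\<bar> > u \<and> (\<forall>l\<in>{1..<m}. \<bar>\<Sum>k=1..l. \<xi> k \<omega>\<bar> \<le> u))
                        \<and> \<bar>(\<Sum>k=1..N. \<xi> k \<omega>) - (\<Sum>k=1..m. \<xi> k \<omega>)\<bar> \<le> s}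
       = prob {\<omega>\<in>space M. \<bar>\<Sum>k=1..m. \<xi> k \<omega>\<bar> > u \<and> (\<forall>l\<in>{1..<m}. \<bar>\<Sum>k=1..l. \<xi> k \<omega>\<bar> \<le> u)}
         * prob {\<omega>\<in>space M. \<bar>(\<Sum>k=1..N. \<xi> k \<omega>) - (\<Sum>k=1..m. \<xi> k \<omega>)\<bar> \<le> s}"
proof -
  let ?P = "\<lambda>f. \<bar>\<Sum>k\<in>{1..m}. f k\<bar> > u \<and> (\<forall>l\<in>{1..<m}. \<bar>\<Sum>k\<in>{1..l}. f k\<bar> \<le> u)"
  let ?Q = "\<lambda>f. \<bar>\<Sum>k\<in>{Suc m..N}. f k\<bar> \<le> s"
  have [measurable]: "(\<lambda>f. \<Sum>k\<in>{1..l}. f k) \<in> borel_measurable (PiM {1..m} (\<lambda>_. borel :: real measure))"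
    if "l \<le> m" for l
    using that by (intro borel_measurable_sum measurable_component_singleton) auto
  have "Measurable.pred (PiM {1..m} (\<lambda>_. borel)) ?P" "Measurable.pred (PiM {Suc m..N} (\<lambda>_. borel)) ?Q"
    by measurable
  note indep = prob_indep_restrict[OF ind _ _ _ this]
  have "(\<Sum>k\<in>{1..l}. restrict (\<lambda>k. \<xi> k \<omega>) {1..m} k) = (\<Sum>k=1..l. \<xi> k \<omega>)" if "l \<le> m" for l \<omega>
    using that by (intro sum.cong) auto
  then have "?P (restrict (\<lambda>k. \<xi> k \<omega>) {1..m})
      \<longleftrightarrow> \<bar>\<Sum>k=1..m. \<xi> k \<omega>\<bar> > u \<and> (\<forall>l\<in>{1..<m}. \<bar>\<Sum>k=1..l. \<xi> k \<omega>\<bar> \<le> u)" for \<omega>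
    by auto
  moreover have "?Q (restrict (\<lambda>k. \<xi> k \<omega>) {Suc m..N})
      \<longleftrightarrow> \<bar>(\<Sum>k=1..N. \<xi> k \<omega>) - (\<Sum>k=1..m. \<xi> k \<omega>)\<bar> \<le> s" for \<omega>
    using sum_atLeastAtMost_split[OF \<open>m \<le> N\<close>, of "\<lambda>k. \<xi> k \<omega>"] by simp
  ultimately show ?thesis using indep by auto
qed

lemma first_index_UN:
  fixes P :: "nat \<Rightarrow> 'a \<Rightarrow> bool"
  shows "{x\<in>X. \<exists>m\<in>{1..N}. P m x} = (\<Union>m\<in>{1..N}. {x\<in>X. P m x \<and> (\<forall>l\<in>{1..<m}. \<not> P l x)})"
proof (intro equalityI subsetI)
  fix x assume "x \<in> {x\<in>X. \<exists>m\<in>{1..N}. P m x}"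
  then obtain m where "x \<in> X" "m \<in> {1..N} \<and> P m x" by auto
  then obtain m where "m \<in> {1..N} \<and> P m x" "\<forall>l<m. \<not> (l \<in> {1..N} \<and> P l x)"
    using exists_least_iff[of "\<lambda>m. m \<in> {1..N} \<and> P m x"] by blast
  with \<open>x \<in> X\<close> show "x \<in> (\<Union>m\<in>{1..N}. {x\<in>X. P m x \<and> (\<forall>l\<in>{1..<m}. \<not> P l x)})"
    by (auto intro!: bexI[of _ m])
qed auto

lemma disjoint_family_on_first_index:
  fixes P :: "nat \<Rightarrow> 'a \<Rightarrow> bool"
  shows "disjoint_family_on (\<lambda>m. {x\<in>X. P m x \<and> (\<forall>l\<in>{1..<m}. \<not> P l x)}) {1..}"
  unfolding disjoint_family_on_def
proof (intro ballI impI)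
  fix m n :: nat assume "m \<in> {1..}" "n \<in> {1..}" "m \<noteq> n"
  then consider "m \<in> {1..<n}" | "n \<in> {1..<m}" by fastforce
  then show "{x\<in>X. P m x \<and> (\<forall>l\<in>{1..<m}. \<not> P l x)} \<inter> {x\<in>X. P n x \<and> (\<forall>l\<in>{1..<n}. \<not> P l x)} = {}"
    by cases blast+
qed

lemma (in prob_space) ottaviani_inequality:
  fixes \<xi> :: "nat \<Rightarrow> 'a \<Rightarrow> real"
  assumes ind: "indep_vars (\<lambda>_. borel) \<xi> {1..}"
    and increments: "\<And>m. m \<in> {1..N} \<Longrightarrow>
          prob {\<omega>\<in>space M. \<bar>(\<Sum>k=1..N. \<xi> k \<omega>) - (\<Sum>k=1..m. \<xi> k \<omega>)\<bar> > s} \<le> \<beta>"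
  shows "prob {\<omega>\<in>space M. \<exists>m\<in>{1..N}. \<bar>\<Sum>k=1..m. \<xi> k \<omega>\<bar> > u} * (1 - \<beta>)
          \<le> prob {\<omega>\<in>space M. \<bar>\<Sum>k=1..N. \<xi> k \<omega>\<bar> > u - s}"
proof -
  define S where "S m \<omega> = (\<Sum>k=1..m. \<xi> k \<omega>)" for m \<omega>
  define A where "A m = {\<omega>\<in>space M. \<bar>S m \<omega>\<bar> > u \<and> (\<forall>l\<in>{1..<m}. \<not> \<bar>S l \<omega>\<bar> > u)}" for m
  define B where "B m = {\<omega>\<in>space M. \<bar>S N \<omega> - S m \<omega>\<bar> \<le> s}" for m
  have [measurable]: "S m \<in> borel_measurable M" for m
    using ind unfolding S_def indep_vars_def by (intro borel_measurable_sum) auto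
  have [measurable]: "A m \<in> events" "B m \<in> events" for m
    unfolding A_def B_def by measurable
  have disjoint: "disjoint_family_on A {1..N}"
    unfolding A_def by (rule disjoint_family_on_mono[OF _ disjoint_family_on_first_index]) auto
  have first_exceedance: "{\<omega>\<in>space M. \<exists>m\<in>{1..N}. \<bar>S m \<omega>\<bar> > u} = (\<Union>m\<in>{1..N}. A m)"
    unfolding A_def by (rule first_index_UN)
  have AB_indep: "prob (A m \<inter> B m) = prob (A m) * prob (B m)" if "m \<in> {1..N}" for m
  proof -
    have A: "A m = {\<omega>\<in>space M. \<bar>S m \<omega>\<bar> > u \<and> (\<forall>l\<in>{1..<m}. \<bar>S l \<omega>\<bar> \<le> u)}"
      unfolding A_def by (simp add: not_less)
    have "A m \<inter> B m = {\<omega>\<in>space M. (\<bar>S m \<omega>\<bar> > u \<and> (\<forall>l\<in>{1..<m}. \<bar>S l \<omega>\<bar> \<le> u)) \<and> \<bar>S N \<omega> - S m \<omega>\<bar> \<le> s}"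
      unfolding A B_def by auto
    with that show ?thesis
      using prob_first_exceedance_indep[OF ind, of m N u s] unfolding A B_def S_def by simp
  qed
  have B_large: "1 - \<beta> \<le> prob (B m)" if "m \<in> {1..N}" for m
  proof -
    have "space M - B m = {\<omega>\<in>space M. \<bar>S N \<omega> - S m \<omega>\<bar> > s}"
      unfolding B_def by auto
    then show ?thesis using increments[OF that] prob_compl[of "B m"] unfolding S_def by simp
  qed
  have "prob {\<omega>\<in>space M. \<exists>m\<in>{1..N}. \<bar>S m \<omega>\<bar> > u} * (1 - \<beta>) = (\<Sum>m\<in>{1..N}. prob (A m) * (1 - \<beta>))"
    unfolding first_exceedance sum_distrib_right[symmetric]
    by (subst finite_measure_finite_Union) (use disjoint in auto)
  also have "\<dots> \<le> (\<Sum>m\<in>{1..N}. prob (A m \<inter> B m))"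
    by (intro sum_mono) (simp add: AB_indep B_large mult_left_mono)
  also have "\<dots> = prob (\<Union>m\<in>{1..N}. A m \<inter> B m)"
    using disjoint
    by (intro finite_measure_finite_Union[symmetric]) (auto simp: disjoint_family_on_def)
  also have "\<dots> \<le> prob {\<omega>\<in>space M. \<bar>S N \<omega>\<bar> > u - s}"
    by (intro finite_measure_mono) (auto simp: A_def B_def)
  finally show ?thesis unfolding S_def .
qed

lemma (in prob_space) prob_max_partial_sum_le_twice:
  fixes \<xi> :: "nat \<Rightarrow> 'a \<Rightarrow> real"
  assumes ind: "indep_vars (\<lambda>_. borel) \<xi> {1..}"
    and small: "\<And>m. m \<le> N \<Longrightarrow> prob {\<omega>\<in>space M. \<bar>\<Sum>k=1..m. \<xi> k \<omega>\<bar> > s / 2} \<le> 1 / 4"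
  shows "prob {\<omega>\<in>space M. \<exists>m\<in>{1..N}. \<bar>\<Sum>k=1..m. \<xi> k \<omega>\<bar> > s + t}
          \<le> 2 * prob {\<omega>\<in>space M. \<bar>\<Sum>k=1..N. \<xi> k \<omega>\<bar> > t}"
proof -
  have [measurable]: "(\<lambda>\<omega>. \<Sum>k=1..m. \<xi> k \<omega>) \<in> borel_measurable M" for m
    using ind unfolding indep_vars_def by (intro borel_measurable_sum) auto
  have "prob {\<omega>\<in>space M. \<bar>(\<Sum>k=1..N. \<xi> k \<omega>) - (\<Sum>k=1..m. \<xi> k \<omega>)\<bar> > s} \<le> 1 / 2"
    if "m \<in> {1..N}" for m
  proof -
    have "prob {\<omega>\<in>space M. \<bar>(\<Sum>k=1..N. \<xi> k \<omega>) - (\<Sum>k=1..m. \<xi> k \<omega>)\<bar> > s}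
       \<le> prob ({\<omega>\<in>space M. \<bar>\<Sum>k=1..N. \<xi> k \<omega>\<bar> > s / 2} \<union> {\<omega>\<in>space M. \<bar>\<Sum>k=1..m. \<xi> k \<omega>\<bar> > s / 2})"
      by (rule finite_measure_mono) (force, measurable)
    also have "\<dots> \<le> prob {\<omega>\<in>space M. \<bar>\<Sum>k=1..N. \<xi> k \<omega>\<bar> > s / 2} + prob {\<omega>\<in>space M. \<bar>\<Sum>k=1..m. \<xi> k \<omega>\<bar> > s / 2}"
      by (rule measure_Un_le) measurable
    also have "\<dots> \<le> 1 / 4 + 1 / 4"
      using small[of N] small[of m] that by (intro add_mono) auto
    finally show ?thesis by simp
  qed
  from ottaviani_inequality[OF ind this, of "s + t"] show ?thesis by simp
qed

lemma (in prob_space) prob_partial_sum_le_twice_later: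
  fixes \<xi> :: "nat \<Rightarrow> 'a \<Rightarrow> real"
  assumes ind: "indep_vars (\<lambda>_. borel) \<xi> {1..}" and "m \<le> n"
    and small_m: "prob {\<omega>\<in>space M. \<bar>\<Sum>k=1..m. \<xi> k \<omega>\<bar> > y / 2} \<le> 1 / 4"
    and small_n: "prob {\<omega>\<in>space M. \<bar>\<Sum>k=1..n. \<xi> k \<omega>\<bar> > y / 2} \<le> 1 / 4"
  shows "prob {\<omega>\<in>space M. \<bar>\<Sum>k=1..m. \<xi> k \<omega>\<bar> > x + y} \<le> 2 * prob {\<omega>\<in>space M. \<bar>\<Sum>k=1..n. \<xi> k \<omega>\<bar> > x}"
proof -
  define Sm where "Sm \<omega> = (\<Sum>k=1..m. \<xi> k \<omega>)" for \<omega>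
  define Sn where "Sn \<omega> = (\<Sum>k=1..n. \<xi> k \<omega>)" for \<omega>
  have [measurable]: "Sm \<in> borel_measurable M" "Sn \<in> borel_measurable M"
    using ind unfolding Sm_def Sn_def indep_vars_def by (auto intro!: borel_measurable_sum)
  have indep: "prob {\<omega>\<in>space M. Sm \<omega> \<in> {z. \<bar>z\<bar> > x + y} \<and> Sn \<omega> - Sm \<omega> \<in> {z. \<bar>z\<bar> \<le> y}}
       = prob {\<omega>\<in>space M. Sm \<omega> \<in> {z. \<bar>z\<bar> > x + y}} * prob {\<omega>\<in>space M. Sn \<omega> - Sm \<omega> \<in> {z. \<bar>z\<bar> \<le> y}}"
    unfolding Sm_def Sn_def by (intro prob_partial_sum_increment_indep[OF ind \<open>m \<le> n\<close>]) measurable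
  have "prob (space M - {\<omega>\<in>space M. \<bar>Sn \<omega> - Sm \<omega>\<bar> \<le> y})
      \<le> prob ({\<omega>\<in>space M. \<bar>Sm \<omega>\<bar> > y / 2} \<union> {\<omega>\<in>space M. \<bar>Sn \<omega>\<bar> > y / 2})"
    by (rule finite_measure_mono) (auto, measurable)
  also have "\<dots> \<le> prob {\<omega>\<in>space M. \<bar>Sm \<omega>\<bar> > y / 2} + prob {\<omega>\<in>space M. \<bar>Sn \<omega>\<bar> > y / 2}"
    by (rule measure_Un_le) measurable
  also have "\<dots> \<le> 1 / 4 + 1 / 4"
    using small_m small_n unfolding Sm_def Sn_def by (intro add_mono) auto
  finally have "1 / 2 \<le> prob {\<omega>\<in>space M. \<bar>Sn \<omega> - Sm \<omega>\<bar> \<le> y}"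
    using prob_compl[of "{\<omega>\<in>space M. \<bar>Sn \<omega> - Sm \<omega>\<bar> \<le> y}"] by simp
  from mult_left_mono[OF this measure_nonneg]
  have "prob {\<omega>\<in>space M. \<bar>Sm \<omega>\<bar> > x + y} * (1 / 2)
      \<le> prob {\<omega>\<in>space M. \<bar>Sm \<omega>\<bar> > x + y \<and> \<bar>Sn \<omega> - Sm \<omega>\<bar> \<le> y}"
    using indep by simp
  also have "\<dots> \<le> prob {\<omega>\<in>space M. \<bar>Sn \<omega>\<bar> > x}"
    by (rule finite_measure_mono) (auto, measurable)
  finally show ?thesis unfolding Sm_def Sn_def by simp
qed

lemma (in prob_space) tail_prob_tendsto_0:
  fixes Z :: "'a \<Rightarrow> real"
  assumes [measurable]: "Z \<in> borel_measurable M"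
  shows "((\<lambda>x. prob {\<omega>\<in>space M. \<bar>Z \<omega>\<bar> > x}) \<longlongrightarrow> 0) at_top"
proof (rule order_tendstoI)
  define A where "A n = {\<omega>\<in>space M. \<bar>Z \<omega>\<bar> > real n}" for n
  have "(\<lambda>n. prob (A n)) \<longlonglongrightarrow> prob (\<Inter>n. A n)"
    by (rule finite_Lim_measure_decseq) (auto simp: A_def decseq_def)
  moreover have "\<omega> \<notin> A (nat \<lceil>\<bar>Z \<omega>\<bar>\<rceil>)" for \<omega>
    unfolding A_def by (auto simp: not_less)
  then have "(\<Inter>n. A n) = {}" by blast
  ultimately have lim: "(\<lambda>n. prob (A n)) \<longlonglongrightarrow> 0" by simp
  fix e :: real assume "0 < e"
  with lim obtain n where "prob (A n) < e"
    by (metis order_tendstoD(2) eventually_sequentially order_refl)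
  moreover have "prob {\<omega>\<in>space M. \<bar>Z \<omega>\<bar> > x} \<le> prob (A n)" if "real n \<le> x" for x
    using that unfolding A_def by (intro finite_measure_mono) auto
  ultimately show "eventually (\<lambda>x. prob {\<omega>\<in>space M. \<bar>Z \<omega>\<bar> > x} < e) at_top"
    unfolding eventually_at_top_linorder by (meson le_less_trans)
qed (auto intro!: always_eventually intro: less_le_trans[OF _ measure_nonneg])

section \<open>Cross products of an i.i.d. array of pairs\<close>

lemma (in prob_space) indep_vars_cross_products:
  fixes U V :: "nat \<Rightarrow> nat \<Rightarrow> 'a \<Rightarrow> real"
  assumes ind: "indep_vars (\<lambda>_. borel) (\<lambda>(k, i) \<omega>. (U k i \<omega>, V k i \<omega>)) ({1..} \<times> {1..})"
    and "1 \<le> i" "1 \<le> j" "i \<noteq> j"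
  shows "indep_vars (\<lambda>_. borel) (\<lambda>k \<omega>. U k i \<omega> * V k j \<omega>) {1..}"
proof -
  let ?Z = "\<lambda>(k, i) \<omega>. (U k i \<omega>, V k i \<omega>)" and ?K = "\<lambda>k. {(k, i), (k, j)}"
  have "indep_vars (\<lambda>k. PiM (?K k) (\<lambda>_. borel)) (\<lambda>k \<omega>. restrict (\<lambda>x. ?Z x \<omega>) (?K k)) {1..}"
    using assms by (intro indep_vars_restrict[OF ind]) (auto simp: disjoint_family_on_def)
  then have "indep_vars (\<lambda>_. borel)
      (\<lambda>k \<omega>. (\<lambda>f. fst (f (k, i)) * snd (f (k, j))) (restrict (\<lambda>x. ?Z x \<omega>) (?K k))) {1..}"
    by (rule indep_vars_compose2) measurable
  then show ?thesis by (rule indep_vars_cong[THEN iffD1, rotated 3]) auto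
qed

lemma (in prob_space) indep_var_cross_factors:
  fixes U V :: "nat \<Rightarrow> nat \<Rightarrow> 'a \<Rightarrow> real"
  assumes ind: "indep_vars (\<lambda>_. borel) (\<lambda>(k, i) \<omega>. (U k i \<omega>, V k i \<omega>)) ({1..} \<times> {1..})"
    and "1 \<le> k" "1 \<le> i" "1 \<le> j" "i \<noteq> j"
  shows "indep_var borel (U k i) borel (V k j)"
proof -
  let ?Z = "\<lambda>(k, i) \<omega>. (U k i \<omega>, V k i \<omega>)"
  have "indep_var (PiM {(k, i)} (\<lambda>_. borel)) (\<lambda>\<omega>. restrict (\<lambda>x. ?Z x \<omega>) {(k, i)})
                  (PiM {(k, j)} (\<lambda>_. borel)) (\<lambda>\<omega>. restrict (\<lambda>x. ?Z x \<omega>) {(k, j)})"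
    using assms by (intro indep_var_restrict[OF ind]) auto
  then have "indep_var borel ((\<lambda>f. fst (f (k, i))) \<circ> (\<lambda>\<omega>. restrict (\<lambda>x. ?Z x \<omega>) {(k, i)}))
                       borel ((\<lambda>f. snd (f (k, j))) \<circ> (\<lambda>\<omega>. restrict (\<lambda>x. ?Z x \<omega>) {(k, j)}))"
    by (rule indep_var_compose) measurable
  then show ?thesis by (simp add: comp_def)
qed

lemma (in prob_space) distr_pair_components_eq:
  fixes U V U' V' :: "'a \<Rightarrow> real"
  assumes eq: "distr M borel (\<lambda>\<omega>. (U \<omega>, V \<omega>)) = distr M borel (\<lambda>\<omega>. (U' \<omega>, V' \<omega>))"
    and [measurable]: "(\<lambda>\<omega>. (U \<omega>, V \<omega>)) \<in> borel_measurable M" "(\<lambda>\<omega>. (U' \<omega>, V' \<omega>)) \<in> borel_measurable M"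
  shows "distr M borel U = distr M borel U'" "distr M borel V = distr M borel V'"
proof -
  have "distr (distr M borel (\<lambda>\<omega>. (U \<omega>, V \<omega>))) borel fst = distr (distr M borel (\<lambda>\<omega>. (U' \<omega>, V' \<omega>))) borel fst"
    using eq by simp
  then show "distr M borel U = distr M borel U'"
    by (subst (asm) (1 2) distr_distr) (simp_all add: comp_def)
  have "distr (distr M borel (\<lambda>\<omega>. (U \<omega>, V \<omega>))) borel snd = distr (distr M borel (\<lambda>\<omega>. (U' \<omega>, V' \<omega>))) borel snd"
    using eq by simp
  then show "distr M borel V = distr M borel V'"
    by (subst (asm) (1 2) distr_distr) (simp_all add: comp_def)
qed

lemma (in prob_space) distr_cross_product_eq:
  fixes U V :: "nat \<Rightarrow> nat \<Rightarrow> 'a \<Rightarrow> real"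
  assumes ind: "indep_vars (\<lambda>_. borel) (\<lambda>(k, i) \<omega>. (U k i \<omega>, V k i \<omega>)) ({1..} \<times> {1..})"
    and ident: "\<And>k i. 1 \<le> k \<Longrightarrow> 1 \<le> i \<Longrightarrow>
          distr M borel (\<lambda>\<omega>. (U k i \<omega>, V k i \<omega>)) = distr M borel (\<lambda>\<omega>. (U 1 1 \<omega>, V 1 1 \<omega>))"
    and ij: "1 \<le> k" "1 \<le> i" "1 \<le> j" "i \<noteq> j"
  shows "distr M borel (\<lambda>\<omega>. U k i \<omega> * V k j \<omega>) = distr M borel (\<lambda>\<omega>. U 1 1 \<omega> * V 1 2 \<omega>)"
proof -
  have pair_rv: "(\<lambda>\<omega>. (U k i \<omega>, V k i \<omega>)) \<in> borel_measurable M" if "1 \<le> k" "1 \<le> i" for k i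
    using ind that unfolding indep_vars_def by fastforce
  have U: "distr M borel (U k i) = distr M borel (U 1 1)"
    and V: "distr M borel (V k i) = distr M borel (V 1 1)" if "1 \<le> k" "1 \<le> i" for k i
    using distr_pair_components_eq[OF ident[OF that] pair_rv[OF that] pair_rv[of 1 1]] by simp_all
  show ?thesis
    by (rule distr_indep_binop_eq[where f="(*)", OF indep_var_cross_factors[OF ind ij]
          indep_var_cross_factors[OF ind, of 1 1 2] U[of k i]])
      (use ij V[of k j] V[of 1 2] in auto)
qed

lemma (in prob_space) cross_sum_tail_eq:
  fixes U V :: "nat \<Rightarrow> nat \<Rightarrow> 'a \<Rightarrow> real" and Y :: "nat \<Rightarrow> 'a \<Rightarrow> real"
  assumes ind: "indep_vars (\<lambda>_. borel) (\<lambda>(k, i) \<omega>. (U k i \<omega>, V k i \<omega>)) ({1..} \<times> {1..})"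
    and ident: "\<And>k i. 1 \<le> k \<Longrightarrow> 1 \<le> i \<Longrightarrow>
          distr M borel (\<lambda>\<omega>. (U k i \<omega>, V k i \<omega>)) = distr M borel (\<lambda>\<omega>. (U 1 1 \<omega>, V 1 1 \<omega>))"
    and Y_indep: "indep_vars (\<lambda>_. borel) Y {1..}"
    and Y_ident: "\<And>k. 1 \<le> k \<Longrightarrow> distr M borel (Y k) = distr M borel (\<lambda>\<omega>. U 1 1 \<omega> * V 1 2 \<omega>)"
    and ij: "1 \<le> i" "1 \<le> j" "i \<noteq> j"
  shows "prob {\<omega>\<in>space M. \<bar>\<Sum>k=1..m. U k i \<omega> * V k j \<omega>\<bar> > x} = prob {\<omega>\<in>space M. \<bar>\<Sum>k=1..m. Y k \<omega>\<bar> > x}"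
proof -
  note cross_indep = indep_vars_cross_products[OF ind ij]
  have "distr M borel (\<lambda>\<omega>. \<Sum>k=1..m. U k i \<omega> * V k j \<omega>) = distr M borel (\<lambda>\<omega>. \<Sum>k=1..m. Y k \<omega>)"
    using distr_cross_product_eq[OF ind ident _ ij] Y_ident
    by (intro distr_partial_sums_eq[OF cross_indep Y_indep]) (simp only:)
  then have "measure (distr M borel (\<lambda>\<omega>. \<Sum>k=1..m. U k i \<omega> * V k j \<omega>)) {z. \<bar>z\<bar> > x}
      = measure (distr M borel (\<lambda>\<omega>. \<Sum>k=1..m. Y k \<omega>)) {z. \<bar>z\<bar> > x}"
    by simp
  moreover have "(\<lambda>\<omega>. \<Sum>k=1..m. U k i \<omega> * V k j \<omega>) \<in> borel_measurable M"
    "(\<lambda>\<omega>. \<Sum>k=1..m. Y k \<omega>) \<in> borel_measurable M"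
    using cross_indep Y_indep unfolding indep_vars_def by (auto intro!: borel_measurable_sum)
  ultimately show ?thesis
    by (simp add: measure_distr vimage_def Int_def conj_commute)
qed

section \<open>Geometric blocks\<close>

fun geom_blocks :: "nat \<Rightarrow> nat \<Rightarrow> nat" where
  "geom_blocks q 0 = q"
| "geom_blocks q (Suc k) = geom_blocks q k + geom_blocks q k div q"

lemma geom_blocks_ge: "1 \<le> q \<Longrightarrow> q + k \<le> geom_blocks q k"
proof (induction k)
  case (Suc k)
  then have "0 < geom_blocks q k div q" by (auto simp: div_greater_zero_iff)
  with Suc show ?case by simp
qed simp

lemma strict_mono_geom_blocks:
  assumes "1 \<le> q"
  shows "strict_mono (geom_blocks q)"
proof (rule strict_monoI_Suc)
  fix k
  have "q \<le> geom_blocks q k" using geom_blocks_ge[OF assms, of k] by simp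
  with assms have "0 < geom_blocks q k div q" by (simp add: div_greater_zero_iff)
  then show "geom_blocks q k < geom_blocks q (Suc k)" by simp
qed

lemma geom_blocks_Suc_le: "real (geom_blocks q (Suc k)) \<le> (1 + 1 / real q) * real (geom_blocks q k)"
proof -
  have "real (geom_blocks q k div q) * real q \<le> real (geom_blocks q k)"
    by (metis div_times_less_eq_dividend of_nat_le_iff of_nat_mult)
  then have "real (geom_blocks q k div q) \<le> real (geom_blocks q k) / real q"
    by (cases "q = 0") (simp_all add: field_simps)
  then show ?thesis by (simp add: algebra_simps)
qed

lemma geom_blocks_Suc_Suc_le:
  assumes "1 \<le> q"
  shows "real (geom_blocks q (Suc (Suc k))) \<le> (1 + 3 / real q) * real (geom_blocks q k)"
proof -
  have "real (geom_blocks q (Suc (Suc k))) \<le> (1 + 1 / real q) * ((1 + 1 / real q) * real (geom_blocks q k))"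
    using geom_blocks_Suc_le[of q "Suc k"] geom_blocks_Suc_le[of q k]
    by (meson order_trans mult_left_mono add_nonneg_nonneg zero_le_one divide_nonneg_nonneg of_nat_0_le_iff)
  also have "\<dots> = (1 + 2 / real q + 1 / (real q)\<^sup>2) * real (geom_blocks q k)"
    using assms by (simp add: field_simps power2_eq_square)
  also have "\<dots> \<le> (1 + 3 / real q) * real (geom_blocks q k)"
    using assms by (intro mult_right_mono) (auto simp: divide_simps power2_eq_square algebra_simps)
  finally show ?thesis .
qed

lemma geom_blocks_gap:
  assumes "1 \<le> q"
  shows "geom_blocks q (Suc k) \<le> 4 * q * (geom_blocks q (Suc k) - geom_blocks q k)"
proof -
  define x where "x = geom_blocks q k"
  define d where "d = x div q"
  have "q \<le> x" using geom_blocks_ge[OF assms, of k] unfolding x_def by simp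
  with assms have "0 < d" unfolding d_def by (simp add: div_greater_zero_iff)
  have "x = q * d + x mod q" unfolding d_def by simp
  moreover have "x mod q < q" using assms by simp
  ultimately have "x < q * d + q" by linarith
  also have "\<dots> \<le> 2 * (q * d)" using \<open>0 < d\<close> by simp
  finally have "x < 2 * (q * d)" .
  moreover have "d \<le> q * d" using assms by simp
  ultimately have "x + d \<le> 4 * (q * d)" by linarith
  then show ?thesis by (simp add: x_def d_def mult.assoc)
qed

lemma strict_mono_between:
  fixes f :: "nat \<Rightarrow> nat"
  assumes "strict_mono f" and "f m < n"
  shows "\<exists>k\<ge>m. f k < n \<and> n \<le> f (Suc k)"
proof -
  define k' where "k' = (LEAST k. n \<le> f k)"
  have "n \<le> f k'"
    unfolding k'_def by (rule LeastI[of _ n]) (rule seq_suble[OF assms(1)])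
  moreover have "f k < n" if "k < k'" for k
    using not_less_Least[of k "\<lambda>k. n \<le> f k"] that unfolding k'_def by simp
  moreover have "m < k'"
  proof (rule ccontr)
    assume "\<not> m < k'"
    then have "f k' \<le> f m" using strict_mono_less_eq[OF assms(1)] by simp
    with \<open>n \<le> f k'\<close> \<open>f m < n\<close> show False by simp
  qed
  ultimately show ?thesis
    by (intro exI[of _ "k' - 1"]) (simp add: Suc_diff_Suc[of 0, simplified])
qed

lemma summable_sum_blocks:
  fixes f :: "nat \<Rightarrow> real"
  assumes f: "summable f" "\<And>n. 0 \<le> f n" and nb: "strict_mono nb"
  shows "summable (\<lambda>k. \<Sum>n\<in>{nb k<..nb (Suc k)}. f n)"
proof (rule bounded_imp_summable)
  show "0 \<le> (\<Sum>n\<in>{nb k<..nb (Suc k)}. f n)" for k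
    using f by (simp add: sum_nonneg)
  have blocks: "(\<Sum>k\<le>K. \<Sum>n\<in>{nb k<..nb (Suc k)}. f n) = (\<Sum>n\<in>{nb 0<..nb (Suc K)}. f n)" for K
  proof (induction K)
    case (Suc K)
    have "{nb 0<..nb (Suc (Suc K))} = {nb 0<..nb (Suc K)} \<union> {nb (Suc K)<..nb (Suc (Suc K))}"
      using strict_mono_less_eq[OF nb, of 0 "Suc K"] strict_monoD[OF nb, of "Suc K" "Suc (Suc K)"] by auto
    with Suc show ?case by (simp add: sum.union_disjoint[symmetric])
  qed simp
  show "(\<Sum>k\<le>K. \<Sum>n\<in>{nb k<..nb (Suc k)}. f n) \<le> suminf f" for K
    unfolding blocks using f by (intro sum_le_suminf) auto
qed

section \<open>The blocking argument\<close>

lemma Tstat_le: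
  assumes "0 \<le> X"
    and "\<And>i j. 1 \<le> i \<Longrightarrow> i \<le> p n \<Longrightarrow> 1 \<le> j \<Longrightarrow> j \<le> p n \<Longrightarrow> i \<noteq> j \<Longrightarrow>
           \<bar>\<Sum>k=1..n. U k i \<omega> * V k j \<omega>\<bar> \<le> X"
  shows "Tstat U V p n \<omega> \<le> X"
proof -
  have "finite {\<bar>\<Sum>k=1..n. U k i \<omega> * V k j \<omega>\<bar> | i j. 1 \<le> i \<and> i \<le> p n \<and> 1 \<le> j \<and> j \<le> p n \<and> i \<noteq> j}"
    by (rule finite_subset[of _ "(\<lambda>(i, j). \<bar>\<Sum>k=1..n. U k i \<omega> * V k j \<omega>\<bar>) ` ({1..p n} \<times> {1..p n})"]) auto
  with assms show ?thesis unfolding Tstat_def by (subst Max_le_iff) auto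
qed

(* U and V enter only through the cross sums: their summands are independent and their tails are
   those of the partial sums of Y. *)
locale cross_sum_bound = prob_space M for M :: "'a measure" +
  fixes U V :: "nat \<Rightarrow> nat \<Rightarrow> 'a \<Rightarrow> real" and Y :: "nat \<Rightarrow> 'a \<Rightarrow> real"
    and p :: "nat \<Rightarrow> nat" and a :: "nat \<Rightarrow> real" and lam :: real
  assumes cross_indep: "\<And>i j. 1 \<le> i \<Longrightarrow> 1 \<le> j \<Longrightarrow> i \<noteq> j \<Longrightarrow>
          indep_vars (\<lambda>_. borel) (\<lambda>k \<omega>. U k i \<omega> * V k j \<omega>) {1..}"
    and cross_tail: "\<And>i j m x. 1 \<le> i \<Longrightarrow> 1 \<le> j \<Longrightarrow> i \<noteq> j \<Longrightarrow>
          prob {\<omega>\<in>space M. \<bar>\<Sum>k=1..m. U k i \<omega> * V k j \<omega>\<bar> > x} = prob {\<omega>\<in>space M. \<bar>\<Sum>k=1..m. Y k \<omega>\<bar> > x}"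
    and Y_indep: "indep_vars (\<lambda>_. borel) Y {1..}"
    and p_mono: "\<And>n. n \<ge> 1 \<Longrightarrow> p n \<le> p (Suc n)"
    and a_pos: "\<And>n. n \<ge> 1 \<Longrightarrow> a n > 0"
    and a_mono: "\<And>n. n \<ge> 1 \<Longrightarrow> a n \<le> a (Suc n)"
    and a_inf: "filterlim a at_top sequentially"
    and a_reg: "((\<lambda>c. limsup (\<lambda>n. ereal (a (nat \<lfloor>c * real n\<rfloor>) / a n))) \<longlongrightarrow> ereal 1) (at_right 1)"
    and S_prob: "\<And>\<epsilon>. \<epsilon> > 0 \<Longrightarrow>
          (\<lambda>n. measure M {\<omega> \<in> space M. \<bar>(\<Sum>k=1..n. Y k \<omega>) / a n\<bar> > \<epsilon>}) \<longlonglongrightarrow> 0"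
    and lam_pos: "0 < lam"
    and series: "summable (\<lambda>n. real (p (Suc n))^2 / real (Suc n) *
          measure M {\<omega> \<in> space M. \<bar>\<Sum>k=1..Suc n. Y k \<omega>\<bar> / a (Suc n) > lam})"
begin

definition tail :: "nat \<Rightarrow> real \<Rightarrow> real" where
  "tail m x = prob {\<omega>\<in>space M. \<bar>\<Sum>k=1..m. Y k \<omega>\<bar> > x}"

definition series_term :: "nat \<Rightarrow> real" where
  "series_term n = real (p n)^2 / real n * tail n (lam * a n)"

definition exceed :: "nat \<Rightarrow> nat \<Rightarrow> real \<Rightarrow> 'a set" where
  "exceed r N x = {\<omega>\<in>space M. \<exists>i\<in>{1..r}. \<exists>j\<in>{1..r}. i \<noteq> j \<and>
                     (\<exists>m\<in>{1..N}. \<bar>\<Sum>l=1..m. U l i \<omega> * V l j \<omega>\<bar> > x)}"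

lemma partial_sum_measurable [measurable]: "(\<lambda>\<omega>. \<Sum>k=1..m. Y k \<omega>) \<in> borel_measurable M"
  using Y_indep unfolding indep_vars_def by (auto intro!: borel_measurable_sum)

lemma cross_sum_measurable:
  "1 \<le> i \<Longrightarrow> 1 \<le> j \<Longrightarrow> i \<noteq> j \<Longrightarrow> (\<lambda>\<omega>. \<Sum>l=1..m. U l i \<omega> * V l j \<omega>) \<in> borel_measurable M"
  using cross_indep[of i j] unfolding indep_vars_def by (auto intro!: borel_measurable_sum)

lemma tail_nonneg: "0 \<le> tail m x"
  by (simp add: tail_def)

lemma tail_event: "{\<omega>\<in>space M. \<bar>\<Sum>k=1..m. Y k \<omega>\<bar> > x} \<in> events"
  using borel_measurable_abs[OF partial_sum_measurable] unfolding borel_measurable_iff_greater by blast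

lemma tail_antimono: "x \<le> y \<Longrightarrow> tail m y \<le> tail m x"
  unfolding tail_def by (rule finite_measure_mono[OF _ tail_event]) auto

lemma series_term_nonneg: "0 \<le> series_term n"
  by (simp add: series_term_def tail_nonneg)

lemma a_le:
  assumes "1 \<le> m" "m \<le> n"
  shows "a m \<le> a n"
  using assms(2)
proof (induction rule: dec_induct)
  case (step n)
  with assms(1) a_mono[of n] show ?case by simp
qed simp

lemma p_le:
  assumes "1 \<le> m" "m \<le> n"
  shows "p m \<le> p n"
  using assms(2)
proof (induction rule: dec_induct)
  case (step n)
  with assms(1) p_mono[of n] show ?case by simp
qed simp

lemma summable_series_term: "summable series_term"
proof -
  have "series_term (Suc n) = real (p (Suc n))^2 / real (Suc n) *
          measure M {\<omega> \<in> space M. \<bar>\<Sum>k=1..Suc n. Y k \<omega>\<bar> / a (Suc n) > lam}" for n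
    using a_pos[of "Suc n"] by (simp add: series_term_def tail_def pos_less_divide_eq)
  with series have "summable (\<lambda>n. series_term (Suc n))" by simp
  then show ?thesis by (simp only: summable_Suc_iff)
qed

lemma tail_at_scale_tendsto_0:
  assumes "0 < \<epsilon>"
  shows "(\<lambda>n. tail n (\<epsilon> * a n)) \<longlonglongrightarrow> 0"
proof -
  have "eventually (\<lambda>n. measure M {\<omega> \<in> space M. \<bar>(\<Sum>k=1..n. Y k \<omega>) / a n\<bar> > \<epsilon>} = tail n (\<epsilon> * a n))
          sequentially"
    using eventually_ge_at_top[of 1]
  proof eventually_elim
    case (elim n)
    with a_pos[of n] show ?case by (simp add: tail_def abs_divide pos_less_divide_eq)
  qed
  with S_prob[OF assms] show ?thesis by (rule Lim_transform_eventually)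
qed

lemma eventually_tails_small:
  assumes "0 < \<epsilon>" "0 < \<eta>"
  shows "eventually (\<lambda>N. \<forall>m\<le>N. tail m (\<epsilon> * a N) \<le> \<eta>) sequentially"
proof -
  obtain M0 where M0: "\<forall>n\<ge>M0. tail n (\<epsilon> * a n) < \<eta>"
    using order_tendstoD(2)[OF tail_at_scale_tendsto_0[OF assms(1)] assms(2)]
    by (auto simp: eventually_sequentially)
  have "filterlim (\<lambda>N. \<epsilon> * a N) at_top sequentially"
    using assms(1) a_inf by (intro filterlim_tendsto_pos_mult_at_top[OF tendsto_const])
  then have "(\<lambda>N. tail m (\<epsilon> * a N)) \<longlonglongrightarrow> 0" for m
    unfolding tail_def by (rule filterlim_compose[OF tail_prob_tendsto_0[OF partial_sum_measurable]])
  then have "eventually (\<lambda>N. tail m (\<epsilon> * a N) < \<eta>) sequentially" for m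
    using assms(2) by (rule order_tendstoD(2))
  then have "eventually (\<lambda>N. \<forall>m\<in>{..<max 1 M0}. tail m (\<epsilon> * a N) < \<eta>) sequentially"
    by (intro eventually_ball_finite) auto
  with eventually_ge_at_top[of "max 1 M0"] show ?thesis
  proof eventually_elim
    case (elim N)
    show ?case
    proof (intro allI impI)
      fix m assume "m \<le> N"
      show "tail m (\<epsilon> * a N) \<le> \<eta>"
      proof (cases "m < max 1 M0")
        case False
        then have "tail m (\<epsilon> * a N) \<le> tail m (\<epsilon> * a m)"
          using \<open>m \<le> N\<close> assms(1) a_le[of m N] by (intro tail_antimono) simp
        also have "\<dots> \<le> \<eta>" using False M0 by (simp add: less_imp_le)
        finally show ?thesis .
      qed (use elim in \<open>auto intro: less_imp_le\<close>)
    qed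
  qed
qed

lemma a_floor_mult_le:
  assumes "0 < \<delta>"
  shows "\<exists>c>1. eventually (\<lambda>n. a (nat \<lfloor>c * real n\<rfloor>) \<le> (1 + \<delta>) * a n) sequentially"
proof -
  have "eventually (\<lambda>c. limsup (\<lambda>n. ereal (a (nat \<lfloor>c * real n\<rfloor>) / a n)) < ereal (1 + \<delta>)) (at_right 1)"
    using assms by (intro order_tendstoD(2)[OF a_reg]) simp
  then obtain b where "1 < b"
    and b: "\<And>c. 1 < c \<Longrightarrow> c < b \<Longrightarrow> limsup (\<lambda>n. ereal (a (nat \<lfloor>c * real n\<rfloor>) / a n)) < ereal (1 + \<delta>)"
    by (auto simp: eventually_at_right_field)
  define c where "c = (1 + b) / 2"
  have "1 < c" "c < b" using \<open>1 < b\<close> by (simp_all add: c_def)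
  with b have "eventually (\<lambda>n. ereal (a (nat \<lfloor>c * real n\<rfloor>) / a n) < ereal (1 + \<delta>)) sequentially"
    by (intro Limsup_lessD) simp
  with eventually_ge_at_top[of 1]
  have "eventually (\<lambda>n. a (nat \<lfloor>c * real n\<rfloor>) \<le> (1 + \<delta>) * a n) sequentially"
    by eventually_elim (use a_pos in \<open>auto simp: pos_divide_less_eq\<close>)
  with \<open>1 < c\<close> show ?thesis by blast
qed

lemma geom_blocks_a_le:
  assumes "0 < \<delta>"
  shows "\<exists>q\<ge>1. eventually (\<lambda>k. a (geom_blocks q (Suc (Suc k))) \<le> (1 + \<delta>) * a (geom_blocks q k)) sequentially"
proof -
  obtain c n0 where "1 < c" and c: "\<And>n. n0 \<le> n \<Longrightarrow> a (nat \<lfloor>c * real n\<rfloor>) \<le> (1 + \<delta>) * a n"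
    using a_floor_mult_le[OF assms] by (auto simp: eventually_sequentially)
  define q where "q = nat \<lceil>3 / (c - 1)\<rceil>"
  have "0 < \<lceil>3 / (c - 1)\<rceil>" using \<open>1 < c\<close> by simp
  then have "1 \<le> q" unfolding q_def by linarith
  have "3 / (c - 1) \<le> real q" unfolding q_def by linarith
  with \<open>1 < c\<close> \<open>1 \<le> q\<close> have q: "1 + 3 / real q \<le> c" by (simp add: field_simps)
  have "a (geom_blocks q (Suc (Suc k))) \<le> (1 + \<delta>) * a (geom_blocks q k)" if "n0 \<le> k" for k
  proof -
    have "real (geom_blocks q (Suc (Suc k))) \<le> (1 + 3 / real q) * real (geom_blocks q k)"
      by (rule geom_blocks_Suc_Suc_le[OF \<open>1 \<le> q\<close>])
    also have "\<dots> \<le> c * real (geom_blocks q k)" using q by (intro mult_right_mono) auto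
    finally have "geom_blocks q (Suc (Suc k)) \<le> nat \<lfloor>c * real (geom_blocks q k)\<rfloor>"
      by (simp add: le_nat_floor)
    then have "a (geom_blocks q (Suc (Suc k))) \<le> a (nat \<lfloor>c * real (geom_blocks q k)\<rfloor>)"
      using geom_blocks_ge[OF \<open>1 \<le> q\<close>, of "Suc (Suc k)"] \<open>1 \<le> q\<close> by (intro a_le) auto
    also have "\<dots> \<le> (1 + \<delta>) * a (geom_blocks q k)"
      using geom_blocks_ge[OF \<open>1 \<le> q\<close>, of k] that by (intro c) simp
    finally show ?thesis .
  qed
  with \<open>1 \<le> q\<close> show ?thesis by (auto simp: eventually_sequentially)
qed

lemma exceed_eq_UN:
  "exceed r N x = (\<Union>(i, j)\<in>{(i, j)\<in>{1..r} \<times> {1..r}. i \<noteq> j}.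
     {\<omega>\<in>space M. \<exists>m\<in>{1..N}. \<bar>\<Sum>l=1..m. U l i \<omega> * V l j \<omega>\<bar> > x})"
  (is "_ = (\<Union>(i, j)\<in>?Q. ?F i j)")
proof (intro equalityI subsetI)
  fix \<omega> assume "\<omega> \<in> exceed r N x"
  then obtain i j where "(i, j) \<in> ?Q" "\<omega> \<in> ?F i j"
    unfolding exceed_def by blast
  then show "\<omega> \<in> (\<Union>(i, j)\<in>?Q. ?F i j)" by blast
next
  fix \<omega> assume "\<omega> \<in> (\<Union>(i, j)\<in>?Q. ?F i j)"
  then obtain i j where "(i, j) \<in> ?Q" "\<omega> \<in> ?F i j" by blast
  then show "\<omega> \<in> exceed r N x" unfolding exceed_def by blast
qed

lemma cross_exceed_event:
  assumes "1 \<le> i" "1 \<le> j" "i \<noteq> j"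
  shows "{\<omega>\<in>space M. \<exists>m\<in>{1..N}. \<bar>\<Sum>l=1..m. U l i \<omega> * V l j \<omega>\<bar> > x} \<in> events"
  using cross_sum_measurable[OF assms] by measurable

lemma exceed_event: "exceed r N x \<in> events"
  unfolding exceed_eq_UN
proof (rule sets.finite_UN)
  show "finite {(i, j)\<in>{1..r} \<times> {1..r}. i \<noteq> j}"
    by (rule finite_subset[of _ "{1..r} \<times> {1..r}"]) auto
  fix ij assume "ij \<in> {(i, j)\<in>{1..r} \<times> {1..r}. i \<noteq> j}"
  then obtain i j where "ij = (i, j)" "1 \<le> i" "1 \<le> j" "i \<noteq> j" by auto
  then show "(case ij of (i, j) \<Rightarrow> {\<omega>\<in>space M. \<exists>m\<in>{1..N}. \<bar>\<Sum>l=1..m. U l i \<omega> * V l j \<omega>\<bar> > x})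
      \<in> events"
    by (simp only: prod.case) (rule cross_exceed_event)
qed

lemma prob_exceed_le:
  assumes small: "\<And>m. m \<le> N \<Longrightarrow> tail m (s / 2) \<le> 1 / 4"
  shows "prob (exceed r N (s + t)) \<le> real r ^ 2 * (2 * tail N t)"
proof -
  define Q where "Q = {(i, j)\<in>{1..r} \<times> {1..r}. i \<noteq> j}"
  define F where "F = (\<lambda>(i, j). {\<omega>\<in>space M. \<exists>m\<in>{1..N}. \<bar>\<Sum>l=1..m. U l i \<omega> * V l j \<omega>\<bar> > s + t})"
  have F_event: "F ij \<in> events" and F_le: "prob (F ij) \<le> 2 * tail N t" if "ij \<in> Q" for ij
  proof -
    from \<open>ij \<in> Q\<close> obtain i j where ij: "ij = (i, j)" "1 \<le> i" "1 \<le> j" "i \<noteq> j"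
      by (auto simp: Q_def)
    show "F ij \<in> events"
      unfolding F_def ij(1) prod.case by (rule cross_exceed_event[OF ij(2-4)])
    have tails: "prob {\<omega>\<in>space M. \<bar>\<Sum>l=1..m. U l i \<omega> * V l j \<omega>\<bar> > x} = tail m x" for m x
      unfolding tail_def by (rule cross_tail[OF ij(2-4)])
    have "prob {\<omega>\<in>space M. \<exists>m\<in>{1..N}. \<bar>\<Sum>l=1..m. U l i \<omega> * V l j \<omega>\<bar> > s + t}
        \<le> 2 * prob {\<omega>\<in>space M. \<bar>\<Sum>l=1..N. U l i \<omega> * V l j \<omega>\<bar> > t}"
      by (intro prob_max_partial_sum_le_twice[OF cross_indep[OF ij(2-4)]])
        (simp only: tails, rule small)
    then show "prob (F ij) \<le> 2 * tail N t"
      by (simp only: F_def ij(1) prod.case tails)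
  qed
  have "finite Q" by (rule finite_subset[of _ "{1..r} \<times> {1..r}"]) (auto simp: Q_def)
  have "card Q \<le> card ({1..r} \<times> {1..r})"
    by (intro card_mono) (auto simp: Q_def)
  then have card_Q: "real (card Q) \<le> real r ^ 2"
    by (simp add: power2_eq_square flip: of_nat_mult)
  have "prob (exceed r N (s + t)) \<le> (\<Sum>ij\<in>Q. prob (F ij))"
    unfolding exceed_eq_UN Q_def[symmetric] F_def[symmetric]
    by (rule measure_UNION_le[OF \<open>finite Q\<close> F_event])
  also have "\<dots> \<le> real (card Q) * (2 * tail N t)"
    using F_le by (rule sum_bounded_above)
  also have "\<dots> \<le> real r ^ 2 * (2 * tail N t)"
    using card_Q tail_nonneg by (intro mult_right_mono) auto
  finally show ?thesis .
qed

lemma prob_exceed_le_series_term: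
  assumes "1 \<le> N" "N < n" and a_n: "a n \<le> (1 + \<delta>) * A"
    and small: "\<And>m. m \<le> n \<Longrightarrow> tail m (lam * \<delta> * A / 2) \<le> 1 / 4"
  shows "prob (exceed (p N) N (lam * (1 + 3 * \<delta>) * A)) \<le> 4 * real n * series_term n"
proof -
  define t where "t = lam * (1 + 2 * \<delta>) * A"
  have "lam * (1 + 3 * \<delta>) * A = lam * \<delta> * A + t" by (simp add: t_def algebra_simps)
  then have "prob (exceed (p N) N (lam * (1 + 3 * \<delta>) * A)) \<le> real (p N)^2 * (2 * tail N t)"
    using \<open>N < n\<close> by (simp only:) (rule prob_exceed_le, rule small, simp)
  also have "\<dots> \<le> real (p n)^2 * (4 * tail n (lam * a n))"
  proof (rule mult_mono)
    show "real (p N)^2 \<le> real (p n)^2"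
      using p_le[of N n] \<open>1 \<le> N\<close> \<open>N < n\<close> by simp
    have "prob {\<omega>\<in>space M. \<bar>\<Sum>k=1..N. Y k \<omega>\<bar> > lam * (1 + \<delta>) * A + lam * \<delta> * A}
        \<le> 2 * prob {\<omega>\<in>space M. \<bar>\<Sum>k=1..n. Y k \<omega>\<bar> > lam * (1 + \<delta>) * A}"
      using small[of N] small[of n] \<open>N < n\<close> unfolding tail_def
      by (intro prob_partial_sum_le_twice_later[OF Y_indep]) simp_all
    moreover have "lam * (1 + \<delta>) * A + lam * \<delta> * A = t" by (simp add: t_def algebra_simps)
    ultimately have "tail N t \<le> 2 * tail n (lam * (1 + \<delta>) * A)" by (simp add: tail_def)
    also have "\<dots> \<le> 2 * tail n (lam * a n)"
      using a_n lam_pos by (simp add: tail_antimono)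
    finally show "2 * tail N t \<le> 4 * tail n (lam * a n)" by simp
  qed (simp_all add: tail_nonneg)
  also have "\<dots> = 4 * real n * series_term n"
    using \<open>1 \<le> N\<close> \<open>N < n\<close> by (simp add: series_term_def)
  finally show ?thesis .
qed

lemma prob_exceed_le_block_sum:
  assumes "1 \<le> N" "N < n'" and a_n': "a n' \<le> (1 + \<delta>) * A"
    and small: "\<And>m. m \<le> n' \<Longrightarrow> tail m (lam * \<delta> * A / 2) \<le> 1 / 4"
    and gap: "n' \<le> 4 * q * (n' - N)"
  shows "prob (exceed (p N) N (lam * (1 + 3 * \<delta>) * A)) \<le> 16 * real q * (\<Sum>n\<in>{N<..n'}. series_term n)"
proof -
  let ?E = "exceed (p N) N (lam * (1 + 3 * \<delta>) * A)"
  have "prob ?E \<le> 4 * real n' * series_term n" if "n \<in> {N<..n'}" for n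
  proof -
    have "a n \<le> (1 + \<delta>) * A" using that a_le[of n n'] \<open>1 \<le> N\<close> a_n' by simp
    with that \<open>1 \<le> N\<close> small have "prob ?E \<le> 4 * real n * series_term n"
      by (intro prob_exceed_le_series_term) auto
    also have "\<dots> \<le> 4 * real n' * series_term n"
      using that series_term_nonneg by (intro mult_right_mono) auto
    finally show ?thesis .
  qed
  \<comment> \<open>average over the block, whose length is at least \<open>n' / (4 q)\<close>\<close>
  from sum_bounded_below[of "{N<..n'}", OF this]
  have "real (n' - N) * prob ?E \<le> 4 * real n' * (\<Sum>n\<in>{N<..n'}. series_term n)"
    by (simp add: sum_distrib_left)
  then have "4 * real q * (real (n' - N) * prob ?E) \<le> 4 * real q * (4 * real n' * (\<Sum>n\<in>{N<..n'}. series_term n))"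
    by (rule mult_left_mono) simp
  moreover have "real n' * prob ?E \<le> 4 * real q * (real (n' - N) * prob ?E)"
    using mult_right_mono[OF gap[THEN of_nat_mono] measure_nonneg[of M ?E]] by (simp add: mult.assoc)
  ultimately have "real n' * prob ?E \<le> real n' * (16 * real q * (\<Sum>n\<in>{N<..n'}. series_term n))"
    by (simp add: algebra_simps)
  then show ?thesis using \<open>N < n'\<close> by simp
qed

lemma limsup_le_if_not_exceed:
  assumes nb: "strict_mono nb" "1 \<le> nb 0" and "0 \<le> c" and "\<omega> \<in> space M"
    and not_exceed: "\<And>k. K \<le> k \<Longrightarrow> \<omega> \<notin> exceed (p (nb (Suc k))) (nb (Suc k)) (c * a (nb k))"
  shows "limsup (\<lambda>n. ereal (Tstat U V p n \<omega> / a n)) \<le> ereal c"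
proof (rule Limsup_bounded)
  show "eventually (\<lambda>n. ereal (Tstat U V p n \<omega> / a n) \<le> ereal c) sequentially"
    unfolding eventually_sequentially
  proof (intro exI allI impI)
    fix n assume "Suc (nb K) \<le> n"
    then obtain k where k: "K \<le> k" "nb k < n" "n \<le> nb (Suc k)"
      using strict_mono_between[OF nb(1), of K n] by auto
    have "nb 0 \<le> nb k" using strict_mono_less_eq[OF nb(1)] by simp
    with nb(2) have "1 \<le> nb k" by linarith
    with k have "0 < a n" "a (nb k) \<le> a n"
      using a_pos[of n] a_le[of "nb k" n] by simp_all
    have "Tstat U V p n \<omega> \<le> c * a n"
    proof (rule Tstat_le)
      show "0 \<le> c * a n" using \<open>0 \<le> c\<close> \<open>0 < a n\<close> by simp
      fix i j assume ij: "1 \<le> i" "i \<le> p n" "1 \<le> j" "j \<le> p n" "i \<noteq> j"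
      have "p n \<le> p (nb (Suc k))" using \<open>1 \<le> nb k\<close> k by (intro p_le) simp_all
      with ij have "i \<in> {1..p (nb (Suc k))}" "j \<in> {1..p (nb (Suc k))}" by simp_all
      moreover have "n \<in> {1..nb (Suc k)}" using k \<open>1 \<le> nb k\<close> by simp
      ultimately have "\<not> c * a (nb k) < \<bar>\<Sum>l=1..n. U l i \<omega> * V l j \<omega>\<bar>"
        using not_exceed[OF k(1)] \<open>\<omega> \<in> space M\<close> \<open>i \<noteq> j\<close> unfolding exceed_def by blast
      then have "\<bar>\<Sum>l=1..n. U l i \<omega> * V l j \<omega>\<bar> \<le> c * a (nb k)" by simp
      also have "\<dots> \<le> c * a n" using \<open>0 \<le> c\<close> \<open>a (nb k) \<le> a n\<close> by (rule mult_left_mono[rotated])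
      finally show "\<bar>\<Sum>k=1..n. U k i \<omega> * V k j \<omega>\<bar> \<le> c * a n" .
    qed
    with \<open>0 < a n\<close> show "ereal (Tstat U V p n \<omega> / a n) \<le> ereal c"
      by (simp add: pos_divide_le_eq)
  qed
qed

lemma AE_limsup_le_if_summable:
  assumes nb: "strict_mono nb" "1 \<le> nb 0" and "0 \<le> c"
    and summable: "summable (\<lambda>k. prob (exceed (p (nb (Suc k))) (nb (Suc k)) (c * a (nb k))))"
  shows "AE \<omega> in M. limsup (\<lambda>n. ereal (Tstat U V p n \<omega> / a n)) \<le> ereal c"
proof -
  have "AE \<omega> in M. eventually (\<lambda>k. \<omega> \<in> space M - exceed (p (nb (Suc k))) (nb (Suc k)) (c * a (nb k)))
      sequentially"
    using summable by (intro borel_cantelli_AE1 exceed_event) (simp_all add: emeasure_eq_measure)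
  then show ?thesis
  proof (rule eventually_mono)
    fix \<omega>
    assume "eventually (\<lambda>k. \<omega> \<in> space M - exceed (p (nb (Suc k))) (nb (Suc k)) (c * a (nb k))) sequentially"
    then obtain K where K: "\<And>k. K \<le> k \<Longrightarrow> \<omega> \<in> space M - exceed (p (nb (Suc k))) (nb (Suc k)) (c * a (nb k))"
      by (auto simp: eventually_sequentially)
    show "limsup (\<lambda>n. ereal (Tstat U V p n \<omega> / a n)) \<le> ereal c"
    proof (rule limsup_le_if_not_exceed[OF nb \<open>0 \<le> c\<close>, of \<omega> K])
      show "\<omega> \<in> space M" using K[of K] by simp
      show "\<omega> \<notin> exceed (p (nb (Suc k))) (nb (Suc k)) (c * a (nb k))" if "K \<le> k" for k
        using K[OF that] by simp
    qed
  qed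
qed

lemma eventually_prob_exceed_le_block_sum:
  assumes "0 < \<delta>"
  obtains q where "1 \<le> q"
    and "eventually (\<lambda>k. prob (exceed (p (geom_blocks q (Suc k))) (geom_blocks q (Suc k))
                                    (lam * (1 + 3 * \<delta>) * a (geom_blocks q k)))
           \<le> 16 * real q * (\<Sum>n\<in>{geom_blocks q (Suc k)<..geom_blocks q (Suc (Suc k))}. series_term n))
         sequentially"
proof -
  obtain q where "1 \<le> q"
    and "eventually (\<lambda>k. a (geom_blocks q (Suc (Suc k))) \<le> (1 + \<delta>) * a (geom_blocks q k)) sequentially"
    using geom_blocks_a_le[OF assms] by blast
  moreover define nb where "nb = geom_blocks q"
  ultimately have ev_reg: "eventually (\<lambda>k. a (nb (Suc (Suc k))) \<le> (1 + \<delta>) * a (nb k)) sequentially"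
    by simp
  have nb: "strict_mono nb" "\<And>k. k \<le> nb k" "1 \<le> nb 0"
    using strict_mono_geom_blocks[OF \<open>1 \<le> q\<close>] geom_blocks_ge[OF \<open>1 \<le> q\<close>] \<open>1 \<le> q\<close>
    by (auto simp: nb_def intro: le_trans[OF le_add2])
  define \<epsilon> where "\<epsilon> = lam * \<delta> / (2 * (1 + \<delta>))"
  have "0 < \<epsilon>" using lam_pos assms by (simp add: \<epsilon>_def)
  have "eventually (\<lambda>k. a (nb (Suc (Suc k))) \<le> (1 + \<delta>) * a (nb k) \<and> (\<forall>m\<le>k. tail m (\<epsilon> * a k) \<le> 1 / 4))
      sequentially"
    by (intro eventually_conj ev_reg eventually_tails_small \<open>0 < \<epsilon>\<close>) simp
  then obtain K where K: "\<And>k. K \<le> k \<Longrightarrow> a (nb (Suc (Suc k))) \<le> (1 + \<delta>) * a (nb k)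
        \<and> (\<forall>m\<le>k. tail m (\<epsilon> * a k) \<le> 1 / 4)"
    unfolding eventually_sequentially by blast
  have "prob (exceed (p (nb (Suc k))) (nb (Suc k)) (lam * (1 + 3 * \<delta>) * a (nb k)))
      \<le> 16 * real q * (\<Sum>n\<in>{nb (Suc k)<..nb (Suc (Suc k))}. series_term n)" if "K \<le> k" for k
  proof (rule prob_exceed_le_block_sum)
    show "1 \<le> nb (Suc k)" "nb (Suc k) < nb (Suc (Suc k))"
      using nb strict_mono_less_eq[OF nb(1), of 0 "Suc k"] by (auto intro: strict_monoD)
    show "a (nb (Suc (Suc k))) \<le> (1 + \<delta>) * a (nb k)" using K[OF that] by simp
    show "nb (Suc (Suc k)) \<le> 4 * q * (nb (Suc (Suc k)) - nb (Suc k))"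
      unfolding nb_def by (rule geom_blocks_gap[OF \<open>1 \<le> q\<close>])
    fix m assume "m \<le> nb (Suc (Suc k))"
    have "\<epsilon> * a (nb (Suc (Suc k))) \<le> \<epsilon> * ((1 + \<delta>) * a (nb k))"
      using K[OF that] \<open>0 < \<epsilon>\<close> by simp
    also have "\<dots> = lam * \<delta> * a (nb k) / 2" using assms by (simp add: \<epsilon>_def field_simps)
    finally have "tail m (lam * \<delta> * a (nb k) / 2) \<le> tail m (\<epsilon> * a (nb (Suc (Suc k))))"
      by (rule tail_antimono)
    also have "\<dots> \<le> 1 / 4"
      using K[of "nb (Suc (Suc k))"] that nb(2)[of "Suc (Suc k)"] \<open>m \<le> nb (Suc (Suc k))\<close> by simp
    finally show "tail m (lam * \<delta> * a (nb k) / 2) \<le> 1 / 4" .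
  qed
  then show ?thesis
    unfolding nb_def by (intro that[OF \<open>1 \<le> q\<close>] eventually_sequentiallyI[of K])
qed

lemma AE_limsup_le_mult:
  assumes "0 < \<delta>"
  shows "AE \<omega> in M. limsup (\<lambda>n. ereal (Tstat U V p n \<omega> / a n)) \<le> ereal (lam * (1 + 3 * \<delta>))"
proof -
  obtain q where "1 \<le> q"
    and "eventually (\<lambda>k. prob (exceed (p (geom_blocks q (Suc k))) (geom_blocks q (Suc k))
                                    (lam * (1 + 3 * \<delta>) * a (geom_blocks q k)))
           \<le> 16 * real q * (\<Sum>n\<in>{geom_blocks q (Suc k)<..geom_blocks q (Suc (Suc k))}. series_term n))
         sequentially"
    using eventually_prob_exceed_le_block_sum[OF assms] by blast
  moreover define nb where "nb = geom_blocks q"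
  ultimately have bound: "eventually (\<lambda>k. norm (prob (exceed (p (nb (Suc k))) (nb (Suc k)) (lam * (1 + 3 * \<delta>) * a (nb k))))
      \<le> 16 * real q * (\<Sum>n\<in>{nb (Suc k)<..nb (Suc (Suc k))}. series_term n)) sequentially"
    by simp
  have nb: "strict_mono nb" "1 \<le> nb 0"
    using strict_mono_geom_blocks[OF \<open>1 \<le> q\<close>] \<open>1 \<le> q\<close> by (simp_all add: nb_def)
  then have "strict_mono (\<lambda>k. nb (Suc k))"
    by (simp add: strict_mono_Suc_iff)
  then have "summable (\<lambda>k. 16 * real q * (\<Sum>n\<in>{nb (Suc k)<..nb (Suc (Suc k))}. series_term n))"
    by (intro summable_mult summable_sum_blocks summable_series_term series_term_nonneg)
  with bound have "summable (\<lambda>k. prob (exceed (p (nb (Suc k))) (nb (Suc k)) (lam * (1 + 3 * \<delta>) * a (nb k))))"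
    by (rule summable_comparison_test_ev)
  with nb show ?thesis
    using lam_pos assms by (intro AE_limsup_le_if_summable) auto
qed

lemma AE_limsup_le: "AE \<omega> in M. limsup (\<lambda>n. ereal (Tstat U V p n \<omega> / a n)) \<le> ereal lam"
proof -
  have "AE \<omega> in M. \<forall>r::nat. limsup (\<lambda>n. ereal (Tstat U V p n \<omega> / a n)) \<le> ereal (lam * (1 + 3 * (1 / Suc r)))"
    unfolding AE_all_countable by (intro allI AE_limsup_le_mult) simp
  then show ?thesis
  proof (rule eventually_mono)
    fix \<omega>
    assume bound: "\<forall>r::nat. limsup (\<lambda>n. ereal (Tstat U V p n \<omega> / a n)) \<le> ereal (lam * (1 + 3 * (1 / Suc r)))"
    show "limsup (\<lambda>n. ereal (Tstat U V p n \<omega> / a n)) \<le> ereal lam"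
    proof (rule ereal_le_epsilon2)
      fix e :: real assume "0 < e"
      obtain r :: nat where "3 * lam / e < real r" using reals_Archimedean2 by blast
      with \<open>0 < e\<close> lam_pos have "lam * (1 + 3 * (1 / Suc r)) \<le> lam + e"
        by (simp add: field_simps)
      with bound show "limsup (\<lambda>n. ereal (Tstat U V p n \<omega> / a n)) \<le> ereal lam + ereal e"
        by (metis order_trans ereal_less_eq(3) plus_ereal.simps(1))
    qed
  qed
qed

end

theorem theorem3p1:
  fixes M :: "'a measure"
    and U V :: "nat \<Rightarrow> nat \<Rightarrow> 'a \<Rightarrow> real"
    and Y :: "nat \<Rightarrow> 'a \<Rightarrow> real"
    and p :: "nat \<Rightarrow> nat"
    and a :: "nat \<Rightarrow> real"
    and lam :: real
  assumes "prob_space M"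
    and UV_indep: "prob_space.indep_vars M (\<lambda>_. borel)
                     (\<lambda>(k, i) \<omega>. (U k i \<omega>, V k i \<omega>)) ({1..} \<times> {1..})"
    and UV_ident: "\<And>k i. k \<ge> 1 \<Longrightarrow> i \<ge> 1 \<Longrightarrow>
         distr M borel (\<lambda>\<omega>. (U k i \<omega>, V k i \<omega>)) = distr M borel (\<lambda>\<omega>. (U 1 1 \<omega>, V 1 1 \<omega>))"
    and p_pos: "\<And>n. n \<ge> 1 \<Longrightarrow> p n \<ge> 1"
    and p_mono: "\<And>n. n \<ge> 1 \<Longrightarrow> p n \<le> p (Suc n)"
    and Y_indep: "prob_space.indep_vars M (\<lambda>_. borel) Y {1..}"
    and Y_ident: "\<And>n. n \<ge> 1 \<Longrightarrow>
         distr M borel (Y n) = distr M borel (\<lambda>\<omega>. U 1 1 \<omega> * V 1 2 \<omega>)"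
    and a_pos: "\<And>n. n \<ge> 1 \<Longrightarrow> a n > 0"
    and a_mono: "\<And>n. n \<ge> 1 \<Longrightarrow> a n \<le> a (Suc n)"
    and a_inf: "filterlim a at_top sequentially"
    and a_reg: "((\<lambda>c. limsup (\<lambda>n. ereal (a (nat \<lfloor>c * real n\<rfloor>) / a n))) \<longlongrightarrow> ereal 1)
                  (at_right 1)"
    and S_prob: "\<And>\<epsilon>. \<epsilon> > 0 \<Longrightarrow>
         (\<lambda>n. measure M {\<omega> \<in> space M. \<bar>(\<Sum>k=1..n. Y k \<omega>) / a n\<bar> > \<epsilon>}) \<longlonglongrightarrow> 0"
    and lam_pos: "0 < lam"
    and series: "summable (\<lambda>n. real (p (Suc n))^2 / real (Suc n) *
         measure M {\<omega> \<in> space M. \<bar>\<Sum>k=1..Suc n. Y k \<omega>\<bar> / a (Suc n) > lam})"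
  shows "AE \<omega> in M. limsup (\<lambda>n. ereal (Tstat U V p n \<omega> / a n)) \<le> ereal lam"
proof -
  interpret prob_space M by fact
  interpret cross_sum_bound M U V Y p a lam
  proof unfold_locales
    show "indep_vars (\<lambda>_. borel) (\<lambda>k \<omega>. U k i \<omega> * V k j \<omega>) {1..}"
      if "1 \<le> i" "1 \<le> j" "i \<noteq> j" for i j
      using indep_vars_cross_products[OF UV_indep that] .
    show "prob {\<omega>\<in>space M. \<bar>\<Sum>k=1..m. U k i \<omega> * V k j \<omega>\<bar> > x}
        = prob {\<omega>\<in>space M. \<bar>\<Sum>k=1..m. Y k \<omega>\<bar> > x}"
      if "1 \<le> i" "1 \<le> j" "i \<noteq> j" for i j m x
      using cross_sum_tail_eq[OF UV_indep UV_ident Y_indep Y_ident that] .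
  qed (fact Y_indep p_mono a_pos a_mono a_inf a_reg S_prob lam_pos series)+
  show ?thesis by (rule AE_limsup_le)
qed

end
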